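(* Let $\alpha,\beta,\gamma$ be partitions with $\alpha_1\le2$ and let $\Gamma$ be an LR-tableau of type $(\alpha,\beta,\gamma)$ such that every row of $\Gamma$ contains at most one (non-empty) box. Let $\Delta,\Delta'\in\mathcal D_\Gamma$. Then $\Delta'\to\Delta$ (i.e. $\Delta'<_{\rm arc}\Delta$ and there is no $\Delta''\in\mathcal D_\Gamma$ with $\Delta'<_{\rm arc}\Delta''<_{\rm arc}\Delta$) if and only if $\Delta'$ is obtained from $\Delta$ by a single move of type (A) or (B) which reduces the number of crossings by one.
   Context: For a partition $\lambda$, $\lambda'$ is its conjugate; the diagram of $\lambda$ is drawn with $\lambda'_i$ boxes in row $i$, so the $i$-th row of $\beta\setminus\gamma$ consists of the boxes in columns $\gamma'_i+1,\dots,\beta'_i$. With $\alpha_1\le 2$, $\alpha'=(\alpha'_1,\alpha'_2)$. An LR-tableau of type $(\alpha,\beta,\gamma)$ is a filling of $\beta\setminus\gamma$ with $\alpha'_1$ entries $1$ and $\alpha'_2$ entries $2$, weakly increasing along rows, strictly increasing down columns, such that for each $c\ge0$ the number of entries $1$ in columns to the right of column $c$ is at least the number of entries $2$ there. Place the positive integers on a line in decreasing order from left to right. An arc is a pair $(m,n)$, $m>n$ positive integers (source $m$, target $n$); a pole at $n$ is regarded as an arc $(\infty,n)$. An arc diagram of type $(\alpha,\beta,\gamma)$ is a finite multiset of $\alpha'_2$ arcs and $\alpha'_1-\alpha'_2$ poles with, for each $i$, exactly $\beta'_i-\gamma'_i$ members having source or target $i$. It has LR type $\Gamma$ if for each $i$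 the number of arcs with source $i$ equals the number of entries $2$ in row $i$ of $\Gamma$; $\mathcal D_\Gamma$ is the set of such diagrams. Members $(m,n),(k,r)$ cross iff $r<n<k<m$ or $n<r<m<k$; the number of crossings is the number of crossing pairs. Moves: for $a>b>c>d$, (A) replaces arcs $(a,c),(b,d)$ by $(a,d),(b,c)$; (C) replaces them by $(a,b),(c,d)$; for $a>b>c$, (B) replaces arc $(a,c)$ and pole $(\infty,b)$ by arc $(a,b)$ and pole $(\infty,c)$; (D) replaces them by arc $(b,c)$ and pole $(\infty,a)$. $\Delta\le_{\rm arc}\Delta'$ iff $\Delta$ is obtained from $\Delta'$ by a finite (possibly empty) sequence of moves; $<_{\rm arc}$ is the strict relation. *)

theory Defs
  imports Main "HOL-Library.Multiset" "HOL-Library.Extended_Nat"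
begin

text \<open>A partition is a weakly decreasing list of positive integers; its i-th part
(i >= 1) is the (i-1)-th list entry, and 0 beyond the length.\<close>

definition is_partition :: "nat list \<Rightarrow> bool" where
  "is_partition lam \<longleftrightarrow> sorted_wrt (\<ge>) lam \<and> 0 \<notin> set lam"

definition conj :: "nat list \<Rightarrow> nat \<Rightarrow> nat" where
  "conj lam i = length (filter (\<lambda>x. i \<le> x) lam)"

definition is_box :: "nat list \<Rightarrow> nat list \<Rightarrow> nat \<Rightarrow> nat \<Rightarrow> bool" where
  "is_box \<beta> \<gamma> i c \<longleftrightarrow> 1 \<le> i \<and> conj \<gamma> i < c \<and> c \<le> conj \<beta> i"

definition boxes :: "nat list \<Rightarrow> nat list \<Rightarrow> (nat \<times> nat) set" where
  "boxes \<beta> \<gamma> = {(i, c). is_box \<beta> \<gamma> i c}"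

text \<open>A filling is a function T from (row, column) to entries; only its values on
boxes matter.\<close>

definition is_LR_tableau ::
  "nat list \<Rightarrow> nat list \<Rightarrow> nat list \<Rightarrow> (nat \<Rightarrow> nat \<Rightarrow> nat) \<Rightarrow> bool" where
  "is_LR_tableau \<alpha> \<beta> \<gamma> T \<longleftrightarrow>
     (\<forall>i\<ge>1. conj \<gamma> i \<le> conj \<beta> i) \<and>
     (\<forall>(i, c)\<in>boxes \<beta> \<gamma>. T i c \<in> {1, 2}) \<and>
     card {(i, c)\<in>boxes \<beta> \<gamma>. T i c = 1} = conj \<alpha> 1 \<and>
     card {(i, c)\<in>boxes \<beta> \<gamma>. T i c = 2} = conj \<alpha> 2 \<and>
     (\<forall>i c c'. is_box \<beta> \<gamma> i c \<and> is_box \<beta> \<gamma> i c' \<and> c < c' \<longrightarrow> T i c \<le> T i c') \<and>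
     (\<forall>i i' c. is_box \<beta> \<gamma> i c \<and> is_box \<beta> \<gamma> i' c \<and> i < i' \<longrightarrow> T i c < T i' c) \<and>
     (\<forall>c0. card {(i, c)\<in>boxes \<beta> \<gamma>. c0 < c \<and> T i c = 2}
            \<le> card {(i, c)\<in>boxes \<beta> \<gamma>. c0 < c \<and> T i c = 1})"

definition twos_in_row :: "nat list \<Rightarrow> nat list \<Rightarrow> (nat \<Rightarrow> nat \<Rightarrow> nat) \<Rightarrow> nat \<Rightarrow> nat" where
  "twos_in_row \<beta> \<gamma> T i = card {c. is_box \<beta> \<gamma> i c \<and> T i c = 2}"

text \<open>A member is a pair (source, target); an arc (m,n) is (enat m, n) with m > n,
a pole at n is (\<infinity>, n).\<close>

type_synonym member = "enat \<times> nat"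

definition valid_member :: "member \<Rightarrow> bool" where
  "valid_member x \<longleftrightarrow> 1 \<le> snd x \<and> enat (snd x) < fst x"

definition is_arc :: "member \<Rightarrow> bool" where
  "is_arc x \<longleftrightarrow> fst x \<noteq> \<infinity>"

definition is_pole :: "member \<Rightarrow> bool" where
  "is_pole x \<longleftrightarrow> fst x = \<infinity>"

definition touches :: "nat \<Rightarrow> member \<Rightarrow> bool" where
  "touches i x \<longleftrightarrow> fst x = enat i \<or> snd x = i"

definition is_arc_diagram ::
  "nat list \<Rightarrow> nat list \<Rightarrow> nat list \<Rightarrow> member multiset \<Rightarrow> bool" where
  "is_arc_diagram \<alpha> \<beta> \<gamma> D \<longleftrightarrow>
     (\<forall>x\<in>#D. valid_member x) \<and>
     size (filter_mset is_arc D) = conj \<alpha> 2 \<and>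
     size (filter_mset is_pole D) = conj \<alpha> 1 - conj \<alpha> 2 \<and>
     (\<forall>i\<ge>1. size (filter_mset (touches i) D) = conj \<beta> i - conj \<gamma> i)"

definition D_Gamma ::
  "nat list \<Rightarrow> nat list \<Rightarrow> nat list \<Rightarrow> (nat \<Rightarrow> nat \<Rightarrow> nat) \<Rightarrow> member multiset set" where
  "D_Gamma \<alpha> \<beta> \<gamma> T = {D. is_arc_diagram \<alpha> \<beta> \<gamma> D \<and>
     (\<forall>i\<ge>1. size (filter_mset (\<lambda>x. is_arc x \<and> fst x = enat i) D) = twos_in_row \<beta> \<gamma> T i)}"

definition crosses :: "member \<Rightarrow> member \<Rightarrow> bool" where
  "crosses x y \<longleftrightarrow>
     (let m = fst x; n = enat (snd x); k = fst y; r = enat (snd y) in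
        (r < n \<and> n < k \<and> k < m) \<or> (n < r \<and> r < m \<and> m < k))"

text \<open>Number of (unordered) crossing pairs, counted with multiplicity: each unordered
pair is counted twice among ordered pairs, and no member crosses itself.\<close>

definition crossings :: "member multiset \<Rightarrow> nat" where
  "crossings D = (\<Sum>x\<in>#D. \<Sum>y\<in>#D. if crosses x y then 1 else 0) div 2"

text \<open>move D D': D' is obtained from D by the move.\<close>

definition moveA :: "member multiset \<Rightarrow> member multiset \<Rightarrow> bool" where
  "moveA D D' \<longleftrightarrow> (\<exists>a b c d::nat. a > b \<and> b > c \<and> c > d \<and>
     {#(enat a, c), (enat b, d)#} \<subseteq># D \<and>
     D' = D - {#(enat a, c), (enat b, d)#} + {#(enat a, d), (enat b, c)#})"

definition moveC :: "member multiset \<Rightarrow> member multiset \<Rightarrow> bool" where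
  "moveC D D' \<longleftrightarrow> (\<exists>a b c d::nat. a > b \<and> b > c \<and> c > d \<and>
     {#(enat a, c), (enat b, d)#} \<subseteq># D \<and>
     D' = D - {#(enat a, c), (enat b, d)#} + {#(enat a, b), (enat c, d)#})"

definition moveB :: "member multiset \<Rightarrow> member multiset \<Rightarrow> bool" where
  "moveB D D' \<longleftrightarrow> (\<exists>a b c::nat. a > b \<and> b > c \<and>
     {#(enat a, c), (\<infinity>, b)#} \<subseteq># D \<and>
     D' = D - {#(enat a, c), (\<infinity>, b)#} + {#(enat a, b), (\<infinity>, c)#})"

definition moveD :: "member multiset \<Rightarrow> member multiset \<Rightarrow> bool" where
  "moveD D D' \<longleftrightarrow> (\<exists>a b c::nat. a > b \<and> b > c \<and>
     {#(enat a, c), (\<infinity>, b)#} \<subseteq># D \<and>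
     D' = D - {#(enat a, c), (\<infinity>, b)#} + {#(enat b, c), (\<infinity>, a)#})"

definition arc_move :: "member multiset \<Rightarrow> member multiset \<Rightarrow> bool" where
  "arc_move D D' \<longleftrightarrow> moveA D D' \<or> moveB D D' \<or> moveC D D' \<or> moveD D D'"

definition arc_le :: "member multiset \<Rightarrow> member multiset \<Rightarrow> bool" where
  "arc_le X Y \<longleftrightarrow> arc_move\<^sup>*\<^sup>* Y X"

definition arc_less :: "member multiset \<Rightarrow> member multiset \<Rightarrow> bool" where
  "arc_less X Y \<longleftrightarrow> arc_le X Y \<and> X \<noteq> Y"

end

theory Submission
  imports Defs
begin

text \<open>
Moves (C) and (D) strictly decrease the sum of the sources of the arcs, whereas moves (A) and (B)
only re-pair the same sources with the same targets. As the sources of the arcs of a diagram in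
D_Gamma are prescribed by Gamma, every chain of moves between two diagrams of D_Gamma consists of
moves (A) and (B) and stays inside D_Gamma.

If every row of Gamma has at most one box, no point is an endpoint of two members. Then a move
(A) or (B) exchanging a crossing pair x, y for a non-crossing pair x', y' changes the crossings only
through the other members e, and each e crosses x', y' at most as often as x, y; so the move removes
at least one crossing. If it removes more, some member e nests between x and y, and the move
factors into two or three moves (A), (B) passing through e. Hence the crossing number is strictly
decreasing along the order, and covering pairs are exactly the single moves that remove exactly one
crossing.
\<close>

section \<open>Covering pairs of a graded step relation\<close>

lemma tranclp_decreasing:
  fixes f :: "'a \<Rightarrow> nat"
  assumes closed: "\<And>x y. x \<in> S \<Longrightarrow> r x y \<Longrightarrow> y \<in> S"
    and decreasing: "\<And>x y. x \<in> S \<Longrightarrow> r x y \<Longrightarrow> f y < f x"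
    and "r\<^sup>+\<^sup>+ x y" and "x \<in> S"
  shows "y \<in> S \<and> f y < f x"
  using assms(3)
proof (induction rule: tranclp_induct)
  case (base y)
  then show ?case using assms(4) closed decreasing by blast
next
  case (step y z)
  then show ?case using closed decreasing by force
qed

lemma tranclp_cover_iff:
  fixes f :: "'a \<Rightarrow> nat"
  assumes closed: "\<And>x y. x \<in> S \<Longrightarrow> r x y \<Longrightarrow> y \<in> S"
    and decreasing: "\<And>x y. x \<in> S \<Longrightarrow> r x y \<Longrightarrow> f y < f x"
    and split: "\<And>x y. x \<in> S \<Longrightarrow> r x y \<Longrightarrow> f y + 1 \<noteq> f x \<Longrightarrow> \<exists>z. r x z \<and> r\<^sup>+\<^sup>+ z y"
    and "x \<in> S"
  shows "r\<^sup>+\<^sup>+ x y \<and> \<not> (\<exists>z\<in>S. r\<^sup>+\<^sup>+ x z \<and> r\<^sup>+\<^sup>+ z y) \<longleftrightarrow> r x y \<and> f y + 1 = f x"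
proof
  assume cover: "r\<^sup>+\<^sup>+ x y \<and> \<not> (\<exists>z\<in>S. r\<^sup>+\<^sup>+ x z \<and> r\<^sup>+\<^sup>+ z y)"
  have no_detour: False if "r x z" and "r\<^sup>+\<^sup>+ z y" for z
    using cover that closed[OF \<open>x \<in> S\<close>] by blast
  obtain z where "r x z" and "r\<^sup>*\<^sup>* z y" using cover tranclpD by metis
  then have "r x y" using no_detour by (metis rtranclpD)
  moreover have "f y + 1 = f x" using split[OF \<open>x \<in> S\<close> \<open>r x y\<close>] no_detour by blast
  ultimately show "r x y \<and> f y + 1 = f x" ..
next
  assume step: "r x y \<and> f y + 1 = f x"
  have descent: "f v < f u" if "r\<^sup>+\<^sup>+ u v" and "u \<in> S" for u v
    using tranclp_decreasing[where S=S and r=r and f=f] closed decreasing that by blast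
  have False if "z \<in> S" "r\<^sup>+\<^sup>+ x z" "r\<^sup>+\<^sup>+ z y" for z
    using descent[OF that(2) \<open>x \<in> S\<close>] descent[OF that(3,1)] step by linarith
  then show "r\<^sup>+\<^sup>+ x y \<and> \<not> (\<exists>z\<in>S. r\<^sup>+\<^sup>+ x z \<and> r\<^sup>+\<^sup>+ z y)" using step by blast
qed

section \<open>Counting crossings\<close>

lemma crosses_sym: "crosses x y \<longleftrightarrow> crosses y x"
  unfolding crosses_def Let_def by auto

lemma not_crosses_self: "\<not> crosses x x"
  unfolding crosses_def Let_def by auto

lemma crosses_arc_arc:
  "crosses (enat m, n) (enat k, r) \<longleftrightarrow> r < n \<and> n < k \<and> k < m \<or> n < r \<and> r < m \<and> m < k"
  by (simp add: crosses_def Let_def)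

lemma crosses_arc_pole: "crosses (enat m, n) (\<infinity>, r) \<longleftrightarrow> n < r \<and> r < m"
  by (simp add: crosses_def Let_def)

lemma crosses_pole_arc: "crosses (\<infinity>, n) (enat k, r) \<longleftrightarrow> r < n \<and> n < k"
  by (simp add: crosses_def Let_def)

lemma not_crosses_pole_pole: "\<not> crosses (\<infinity>, n) (\<infinity>, r)"
  by (simp add: crosses_def Let_def)

lemma double_crossing_sum_add_mset:
  "(\<Sum>x\<in>#add_mset z D. \<Sum>y\<in>#add_mset z D. of_bool (crosses x y) :: nat)
     = (\<Sum>x\<in>#D. \<Sum>y\<in>#D. of_bool (crosses x y)) + 2 * (\<Sum>y\<in>#D. of_bool (crosses z y))"
  by (simp add: sum_mset.distrib not_crosses_self crosses_sym[of _ z])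

lemma double_crossing_sum: "(\<Sum>x\<in>#D. \<Sum>y\<in>#D. of_bool (crosses x y) :: nat) = 2 * crossings D"
proof (induction D)
  case empty
  then show ?case by (simp add: crossings_def)
next
  case (add z D)
  then show ?case
    unfolding crossings_def of_bool_def[symmetric] double_crossing_sum_add_mset by simp
qed

lemma crossings_add_mset:
  "crossings (add_mset z D) = crossings D + (\<Sum>y\<in>#D. of_bool (crosses z y))"
  using double_crossing_sum_add_mset[of z D] double_crossing_sum[of D]
    double_crossing_sum[of "add_mset z D"] by simp

definition pair_crossings :: "member \<Rightarrow> member \<Rightarrow> member \<Rightarrow> nat" where
  "pair_crossings x y e = of_bool (crosses x e) + of_bool (crosses y e)"

lemma crossings_add_pair:
  "crossings (add_mset x (add_mset y R))
     = crossings R + (\<Sum>e\<in>#R. pair_crossings x y e) + of_bool (crosses x y)"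
  by (simp add: crossings_add_mset pair_crossings_def sum_mset.distrib)

lemma crossings_uncross_pair:
  assumes "crosses x y" and "\<not> crosses x' y'"
    and le: "\<And>e. e \<in># R \<Longrightarrow> pair_crossings x' y' e \<le> pair_crossings x y e"
  shows "crossings (add_mset x' (add_mset y' R)) < crossings (add_mset x (add_mset y R))"
    and "crossings (add_mset x' (add_mset y' R)) + 1 \<noteq> crossings (add_mset x (add_mset y R))
           \<Longrightarrow> \<exists>e\<in>#R. pair_crossings x' y' e < pair_crossings x y e"
proof -
  have sum_le: "(\<Sum>e\<in>#R. pair_crossings x' y' e) \<le> (\<Sum>e\<in>#R. pair_crossings x y e)"
    using le by (rule sum_mset_mono)
  then show "crossings (add_mset x' (add_mset y' R)) < crossings (add_mset x (add_mset y R))"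
    using assms(1,2) by (simp add: crossings_add_pair)
  assume "crossings (add_mset x' (add_mset y' R)) + 1 \<noteq> crossings (add_mset x (add_mset y R))"
  then have "\<not> (\<Sum>e\<in>#R. pair_crossings x y e) \<le> (\<Sum>e\<in>#R. pair_crossings x' y' e)"
    using assms(1,2) sum_le by (simp add: crossings_add_pair)
  then show "\<exists>e\<in>#R. pair_crossings x' y' e < pair_crossings x y e"
    using sum_mset_mono[of R "pair_crossings x y" "pair_crossings x' y'"] by (meson not_le)
qed

lemma replace_pair_iff:
  "{#x, y#} \<subseteq># D \<and> D' = D - {#x, y#} + {#x', y'#} \<longleftrightarrow>
     (\<exists>R. D = add_mset x (add_mset y R) \<and> D' = add_mset x' (add_mset y' R))"
proof
  assume "{#x, y#} \<subseteq># D \<and> D' = D - {#x, y#} + {#x', y'#}"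
  then show "\<exists>R. D = add_mset x (add_mset y R) \<and> D' = add_mset x' (add_mset y' R)"
    by (intro exI[of _ "D - {#x, y#}"]) (auto dest: subset_mset.diff_add)
qed auto

lemma moveA_iff:
  "moveA D D' \<longleftrightarrow> (\<exists>a b c d R. a > b \<and> b > c \<and> c > d \<and>
     D = add_mset (enat a, c) (add_mset (enat b, d) R) \<and>
     D' = add_mset (enat a, d) (add_mset (enat b, c) R))"
  unfolding moveA_def conj_assoc[symmetric] replace_pair_iff by blast

lemma moveB_iff:
  "moveB D D' \<longleftrightarrow> (\<exists>a b c R. a > b \<and> b > c \<and>
     D = add_mset (enat a, c) (add_mset (\<infinity>, b) R) \<and>
     D' = add_mset (enat a, b) (add_mset (\<infinity>, c) R))"
  unfolding moveB_def conj_assoc[symmetric] replace_pair_iff by blast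

lemma moveC_iff:
  "moveC D D' \<longleftrightarrow> (\<exists>a b c d R. a > b \<and> b > c \<and> c > d \<and>
     D = add_mset (enat a, c) (add_mset (enat b, d) R) \<and>
     D' = add_mset (enat a, b) (add_mset (enat c, d) R))"
  unfolding moveC_def conj_assoc[symmetric] replace_pair_iff by blast

lemma moveD_iff:
  "moveD D D' \<longleftrightarrow> (\<exists>a b c R. a > b \<and> b > c \<and>
     D = add_mset (enat a, c) (add_mset (\<infinity>, b) R) \<and>
     D' = add_mset (enat b, c) (add_mset (\<infinity>, a) R))"
  unfolding moveD_def conj_assoc[symmetric] replace_pair_iff by blast

lemma moveA_pairI:
  "a > b \<Longrightarrow> b > c \<Longrightarrow> c > d \<Longrightarrow>
    moveA (add_mset (enat a, c) (add_mset (enat b, d) R)) (add_mset (enat a, d) (add_mset (enat b, c) R))"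
  unfolding moveA_iff by blast

lemma moveB_pairI:
  "a > b \<Longrightarrow> b > c \<Longrightarrow>
    moveB (add_mset (enat a, c) (add_mset (\<infinity>, b) R)) (add_mset (enat a, b) (add_mset (\<infinity>, c) R))"
  unfolding moveB_iff by blast

definition moveAB :: "member multiset \<Rightarrow> member multiset \<Rightarrow> bool" where
  "moveAB D D' \<longleftrightarrow> moveA D D' \<or> moveB D D'"

lemma moveA_through_nested_arc:
  assumes "a > k" "k > b" "b > c" "c > r" "r > d"
  shows "(moveA OO moveA OO moveA)
    (add_mset (enat a, c) (add_mset (enat b, d) (add_mset (enat k, r) R)))
    (add_mset (enat a, d) (add_mset (enat b, c) (add_mset (enat k, r) R)))"
proof (intro relcomppI)
  have "k > c" "c > d" "k > r" using assms by linarith+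
  show "moveA (add_mset (enat a, c) (add_mset (enat b, d) (add_mset (enat k, r) R)))
      (add_mset (enat a, r) (add_mset (enat k, c) (add_mset (enat b, d) R)))"
    using moveA_pairI[OF assms(1) \<open>k > c\<close> assms(4), of "add_mset (enat b, d) R"]
    by (simp add: add_mset_commute)
  show "moveA (add_mset (enat a, r) (add_mset (enat k, c) (add_mset (enat b, d) R)))
      (add_mset (enat a, r) (add_mset (enat k, d) (add_mset (enat b, c) R)))"
    using moveA_pairI[OF assms(2,3) \<open>c > d\<close>, of "add_mset (enat a, r) R"]
    by (simp add: add_mset_commute)
  show "moveA (add_mset (enat a, r) (add_mset (enat k, d) (add_mset (enat b, c) R)))
      (add_mset (enat a, d) (add_mset (enat b, c) (add_mset (enat k, r) R)))"
    using moveA_pairI[OF assms(1) \<open>k > r\<close> assms(5), of "add_mset (enat b, c) R"]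
    by (simp add: add_mset_commute)
qed

lemma moveB_through_nested_pole:
  assumes "a > b" "b > r" "r > c"
  shows "(moveB OO moveB)
    (add_mset (enat a, c) (add_mset (\<infinity>, b) (add_mset (\<infinity>, r) R)))
    (add_mset (enat a, b) (add_mset (\<infinity>, c) (add_mset (\<infinity>, r) R)))"
proof (intro relcomppI)
  have "a > r" using assms by linarith
  show "moveB (add_mset (enat a, c) (add_mset (\<infinity>, b) (add_mset (\<infinity>, r) R)))
      (add_mset (enat a, r) (add_mset (\<infinity>, c) (add_mset (\<infinity>, b) R)))"
    using moveB_pairI[OF \<open>a > r\<close> assms(3), of "add_mset (\<infinity>, b) R"]
    by (simp add: add_mset_commute)
  show "moveB (add_mset (enat a, r) (add_mset (\<infinity>, c) (add_mset (\<infinity>, b) R)))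
      (add_mset (enat a, b) (add_mset (\<infinity>, c) (add_mset (\<infinity>, r) R)))"
    using moveB_pairI[OF assms(1,2), of "add_mset (\<infinity>, c) R"]
    by (simp add: add_mset_commute)
qed

lemma moveB_through_enclosing_arc:
  assumes "k > a" "a > b" "b > r" "r > c"
  shows "(moveA OO moveB OO moveB)
    (add_mset (enat a, c) (add_mset (\<infinity>, b) (add_mset (enat k, r) R)))
    (add_mset (enat a, b) (add_mset (\<infinity>, c) (add_mset (enat k, r) R)))"
proof (intro relcomppI)
  have "a > r" "k > r" using assms by linarith+
  show "moveA (add_mset (enat a, c) (add_mset (\<infinity>, b) (add_mset (enat k, r) R)))
      (add_mset (enat k, c) (add_mset (enat a, r) (add_mset (\<infinity>, b) R)))"
    using moveA_pairI[OF assms(1) \<open>a > r\<close> assms(4), of "add_mset (\<infinity>, b) R"]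
    by (simp add: add_mset_commute)
  show "moveB (add_mset (enat k, c) (add_mset (enat a, r) (add_mset (\<infinity>, b) R)))
      (add_mset (enat k, c) (add_mset (enat a, b) (add_mset (\<infinity>, r) R)))"
    using moveB_pairI[OF assms(2,3), of "add_mset (enat k, c) R"]
    by (simp add: add_mset_commute)
  show "moveB (add_mset (enat k, c) (add_mset (enat a, b) (add_mset (\<infinity>, r) R)))
      (add_mset (enat a, b) (add_mset (\<infinity>, c) (add_mset (enat k, r) R)))"
    using moveB_pairI[OF \<open>k > r\<close> assms(4), of "add_mset (enat a, b) R"]
    by (simp add: add_mset_commute)
qed

section \<open>Chains of moves inside D_Gamma\<close>

definition arc_sources :: "member multiset \<Rightarrow> enat multiset" where
  "arc_sources D = image_mset fst (filter_mset is_arc D)"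

definition source_sum :: "member multiset \<Rightarrow> nat" where
  "source_sum D = (\<Sum>k\<in>#arc_sources D. the_enat k)"

lemma arc_move_source_sum:
  assumes "arc_move D D'"
  shows "moveAB D D' \<and> source_sum D' = source_sum D \<or> source_sum D' < source_sum D"
  using assms unfolding arc_move_def
proof (elim disjE)
  assume "moveA D D'"
  then show ?thesis
    by (auto simp: moveAB_def moveA_iff source_sum_def arc_sources_def is_arc_def)
next
  assume "moveB D D'"
  then show ?thesis
    by (auto simp: moveAB_def moveB_iff source_sum_def arc_sources_def is_arc_def)
next
  assume "moveC D D'"
  then show ?thesis
    by (auto simp: moveC_iff source_sum_def arc_sources_def is_arc_def)
next
  assume "moveD D D'"
  then show ?thesis
    by (auto simp: moveD_iff source_sum_def arc_sources_def is_arc_def)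
qed

lemma arc_move_rtranclp_source_sum:
  "arc_move\<^sup>*\<^sup>* X Y \<Longrightarrow>
     moveAB\<^sup>*\<^sup>* X Y \<and> source_sum Y = source_sum X \<or> source_sum Y < source_sum X"
proof (induction rule: rtranclp_induct)
  case base
  then show ?case by simp
next
  case (step Y Z)
  then show ?case
    using arc_move_source_sum[OF step.hyps(2)] by (auto intro: rtranclp.rtrancl_into_rtrancl)
qed

lemma valid_arc_source: "valid_member x \<Longrightarrow> is_arc x \<Longrightarrow> \<exists>i\<ge>1. fst x = enat i"
  by (cases "fst x") (auto simp: valid_member_def is_arc_def)

lemma count_arc_sources:
  "count (arc_sources D) k = size (filter_mset (\<lambda>x. is_arc x \<and> fst x = k) D)"
  by (simp add: arc_sources_def count_conv_size_mset filter_mset_image_mset filter_filter_mset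
      conj_commute)

lemma D_Gamma_arc_sources:
  assumes "D \<in> D_Gamma \<alpha> \<beta> \<gamma> T" and "E \<in> D_Gamma \<alpha> \<beta> \<gamma> T"
  shows "arc_sources D = arc_sources E"
proof (rule multiset_eqI)
  fix k
  show "count (arc_sources D) k = count (arc_sources E) k"
  proof (cases "\<exists>i\<ge>1. k = enat i")
    case True
    then show ?thesis using assms by (auto simp: count_arc_sources D_Gamma_def)
  next
    case False
    have no_arcs: "filter_mset (\<lambda>x. is_arc x \<and> fst x = k) F = {#}" if "F \<in> D_Gamma \<alpha> \<beta> \<gamma> T" for F
      unfolding filter_mset_eq_mempty_iff
    proof (intro allI impI notI)
      fix x
      assume "x \<in># F" and arc: "is_arc x \<and> fst x = k"
      then have "valid_member x" using that by (simp add: D_Gamma_def is_arc_diagram_def)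
      then show False using arc False valid_arc_source by blast
    qed
    show ?thesis by (simp add: count_arc_sources no_arcs[OF assms(1)] no_arcs[OF assms(2)])
  qed
qed

lemma D_Gamma_source_sum:
  assumes "D \<in> D_Gamma \<alpha> \<beta> \<gamma> T" and "E \<in> D_Gamma \<alpha> \<beta> \<gamma> T"
  shows "source_sum D = source_sum E"
  by (simp add: source_sum_def D_Gamma_arc_sources[OF assms])

lemma D_Gamma_arc_move_rtranclp:
  assumes "D \<in> D_Gamma \<alpha> \<beta> \<gamma> T" and "E \<in> D_Gamma \<alpha> \<beta> \<gamma> T" and "arc_move\<^sup>*\<^sup>* D E"
  shows "moveAB\<^sup>*\<^sup>* D E"
proof -
  have "source_sum E = source_sum D" using D_Gamma_source_sum[OF assms(2,1)] .
  then show ?thesis using arc_move_rtranclp_source_sum[OF assms(3)] by simp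
qed

lemma moveAB_ends:
  assumes "moveAB D D'"
  shows "image_mset fst D' = image_mset fst D" and "image_mset snd D' = image_mset snd D"
  using assms by (auto simp: moveAB_def moveA_iff moveB_iff add_mset_commute)

lemma moveAB_valid:
  assumes "\<forall>x\<in>#D. valid_member x" and "moveAB D D'"
  shows "\<forall>x\<in>#D'. valid_member x"
  using assms unfolding moveAB_def moveA_iff moveB_iff
  by (elim disjE exE conjE) (simp_all add: valid_member_def)

lemma size_filter_fst:
  "size (filter_mset (\<lambda>x. P (fst x)) D) = size (filter_mset P (image_mset fst D))"
  by (simp flip: image_mset_filter_mset_swap)

lemma size_filter_touches:
  assumes "\<forall>x\<in>#D. valid_member x"
  shows "size (filter_mset (touches i) D) = count (image_mset fst D) (enat i) + count (image_mset snd D) i"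
  using assms by (induction D) (auto simp: touches_def valid_member_def)

lemma D_Gamma_same_ends:
  assumes "D \<in> D_Gamma \<alpha> \<beta> \<gamma> T" and valid: "\<forall>x\<in>#D'. valid_member x"
    and fst: "image_mset fst D' = image_mset fst D" and snd: "image_mset snd D' = image_mset snd D"
  shows "D' \<in> D_Gamma \<alpha> \<beta> \<gamma> T"
proof -
  have same_fst: "size (filter_mset (\<lambda>x. P (fst x)) D') = size (filter_mset (\<lambda>x. P (fst x)) D)" for P
    by (simp only: size_filter_fst fst)
  have "size (filter_mset (touches i) D') = size (filter_mset (touches i) D)" for i
    using assms by (simp add: size_filter_touches D_Gamma_def is_arc_diagram_def)
  moreover have "size (filter_mset is_arc D') = size (filter_mset is_arc D)"
    unfolding is_arc_def by (rule same_fst[of "\<lambda>k. k \<noteq> \<infinity>"])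
  moreover have "size (filter_mset is_pole D') = size (filter_mset is_pole D)"
    unfolding is_pole_def by (rule same_fst[of "\<lambda>k. k = \<infinity>"])
  moreover have "size (filter_mset (\<lambda>x. is_arc x \<and> fst x = enat i) D')
      = size (filter_mset (\<lambda>x. is_arc x \<and> fst x = enat i) D)" for i
    unfolding is_arc_def using same_fst[of "\<lambda>k. k \<noteq> \<infinity> \<and> k = enat i"] by simp
  ultimately show ?thesis
    using assms by (simp add: D_Gamma_def is_arc_diagram_def)
qed

lemma moveAB_D_Gamma:
  assumes "D \<in> D_Gamma \<alpha> \<beta> \<gamma> T" and "moveAB D D'"
  shows "D' \<in> D_Gamma \<alpha> \<beta> \<gamma> T"
proof (rule D_Gamma_same_ends[OF assms(1) moveAB_valid moveAB_ends[OF assms(2)]])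
  show "\<forall>x\<in>#D. valid_member x" using assms(1) by (simp add: D_Gamma_def is_arc_diagram_def)
qed (rule assms(2))

section \<open>Uncrossing in diagrams without shared endpoints\<close>

definition is_matching :: "member multiset \<Rightarrow> bool" where
  "is_matching D \<longleftrightarrow> (\<forall>x\<in>#D. valid_member x) \<and> (\<forall>i\<ge>1. size (filter_mset (touches i) D) \<le> 1)"

lemma D_Gamma_is_matching:
  assumes "\<forall>i\<ge>1. card {c. is_box \<beta> \<gamma> i c} \<le> 1" and "D \<in> D_Gamma \<alpha> \<beta> \<gamma> T"
  shows "is_matching D"
proof -
  have "{c. is_box \<beta> \<gamma> i c} = {conj \<gamma> i<..conj \<beta> i}" if "i \<ge> 1" for i
    using that by (auto simp: is_box_def)
  then show ?thesis
    using assms by (auto simp: is_matching_def D_Gamma_def is_arc_diagram_def)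
qed

lemma is_matching_disjoint:
  assumes "is_matching D" and "{#x, e#} \<subseteq># D" and "i \<ge> 1" and "touches i x"
  shows "\<not> touches i e"
proof
  assume "touches i e"
  then have "size (filter_mset (touches i) {#x, e#}) = 2" using assms(4) by simp
  moreover have "size (filter_mset (touches i) {#x, e#}) \<le> size (filter_mset (touches i) D)"
    using assms(2) by (intro size_mset_mono multiset_filter_mono)
  ultimately show False using assms(1,3) by (fastforce simp: is_matching_def)
qed

lemma position_in_chain3:
  fixes a b c x :: nat
  assumes "a > b" "b > c" "x \<notin> {a, b, c}"
  shows "x < c \<or> c < x \<and> x < b \<or> b < x \<and> x < a \<or> a < x"
  using assms by auto

lemma position_in_chain4:
  fixes a b c d x :: nat
  assumes "a > b" "b > c" "c > d" "x \<notin> {a, b, c, d}"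
  shows "x < d \<or> d < x \<and> x < c \<or> c < x \<and> x < b \<or> b < x \<and> x < a \<or> a < x"
  using assms by auto

lemma moveA_pair_crossings:
  fixes a b c d r :: nat and k :: enat
  assumes "a > b" "b > c" "c > d" "valid_member (k, r)" "\<forall>i\<in>{a, b, c, d}. \<not> touches i (k, r)"
  shows "pair_crossings (enat a, d) (enat b, c) (k, r) \<le> pair_crossings (enat a, c) (enat b, d) (k, r) \<and>
    (pair_crossings (enat a, d) (enat b, c) (k, r) < pair_crossings (enat a, c) (enat b, d) (k, r)
       \<longrightarrow> (\<exists>k'. k = enat k' \<and> a > k' \<and> k' > b \<and> c > r \<and> r > d))"
proof (cases k)
  case (enat k')
  then have kr: "k' \<notin> {a, b, c, d}" "r \<notin> {a, b, c, d}" "r < k'"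
    using assms(4,5) by (auto simp: touches_def valid_member_def)
  show ?thesis
    using position_in_chain4[OF assms(1-3) kr(1)] position_in_chain4[OF assms(1-3) kr(2)] kr(3) assms(1-3)
    unfolding enat by (elim disjE conjE) (simp_all add: pair_crossings_def crosses_arc_arc)
next
  case infinity
  have "r \<notin> {a, b, c, d}" using assms(5) by (auto simp: touches_def)
  from position_in_chain4[OF assms(1-3) this] show ?thesis
    using assms(1-3)
    unfolding infinity by (elim disjE conjE) (simp_all add: pair_crossings_def crosses_arc_pole)
qed

lemma moveB_pair_crossings:
  fixes a b c r :: nat and k :: enat
  assumes "a > b" "b > c" "valid_member (k, r)" "\<forall>i\<in>{a, b, c}. \<not> touches i (k, r)"
  shows "pair_crossings (enat a, b) (\<infinity>, c) (k, r) \<le> pair_crossings (enat a, c) (\<infinity>, b) (k, r) \<and>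
    (pair_crossings (enat a, b) (\<infinity>, c) (k, r) < pair_crossings (enat a, c) (\<infinity>, b) (k, r)
       \<longrightarrow> k > enat a \<and> b > r \<and> r > c)"
proof (cases k)
  case (enat k')
  then have kr: "k' \<notin> {a, b, c}" "r \<notin> {a, b, c}" "r < k'"
    using assms(3,4) by (auto simp: touches_def valid_member_def)
  show ?thesis
    using position_in_chain3[OF assms(1,2) kr(1)] position_in_chain3[OF assms(1,2) kr(2)] kr(3) assms(1,2)
    unfolding enat
    by (elim disjE conjE) (simp_all add: pair_crossings_def crosses_arc_arc crosses_pole_arc)
next
  case infinity
  have "r \<notin> {a, b, c}" using assms(4) by (auto simp: touches_def)
  from position_in_chain3[OF assms(1,2) this] show ?thesis
    using assms(1,2) unfolding infinity
    by (elim disjE conjE) (simp_all add: pair_crossings_def crosses_arc_pole not_crosses_pole_pole)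
qed

lemma moveA_crossings:
  assumes "is_matching D" "a > b" "b > c" "c > d"
    and D: "D = add_mset (enat a, c) (add_mset (enat b, d) R)"
  shows "crossings (add_mset (enat a, d) (add_mset (enat b, c) R)) < crossings D"
    and "crossings (add_mset (enat a, d) (add_mset (enat b, c) R)) + 1 \<noteq> crossings D
           \<Longrightarrow> \<exists>k r. (enat k, r) \<in># R \<and> a > k \<and> k > b \<and> c > r \<and> r > d"
proof -
  have "d \<ge> 1" using assms(1) D by (simp add: is_matching_def valid_member_def)
  have pointwise:
    "pair_crossings (enat a, d) (enat b, c) (k, r) \<le> pair_crossings (enat a, c) (enat b, d) (k, r) \<and>
     (pair_crossings (enat a, d) (enat b, c) (k, r) < pair_crossings (enat a, c) (enat b, d) (k, r)
       \<longrightarrow> (\<exists>k'. k = enat k' \<and> a > k' \<and> k' > b \<and> c > r \<and> r > d))"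
    if kr: "(k, r) \<in># R" for k r
  proof (rule moveA_pair_crossings[OF assms(2-4)])
    show "valid_member (k, r)" using assms(1) D kr by (simp add: is_matching_def)
    have "{#(enat a, c), (k, r)#} \<subseteq># D" "{#(enat b, d), (k, r)#} \<subseteq># D" using D kr by simp_all
    from is_matching_disjoint[OF assms(1) this(1)] is_matching_disjoint[OF assms(1) this(2)]
    show "\<forall>i\<in>{a, b, c, d}. \<not> touches i (k, r)"
      using \<open>d \<ge> 1\<close> assms(2-4) by (auto simp: touches_def)
  qed
  have crosses: "crosses (enat a, c) (enat b, d)" "\<not> crosses (enat a, d) (enat b, c)"
    using assms(2-4) by (simp_all add: crosses_arc_arc)
  note uncross = crossings_uncross_pair[OF crosses, of R]
  show "crossings (add_mset (enat a, d) (add_mset (enat b, c) R)) < crossings D"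
    unfolding D using pointwise by (intro uncross(1)) auto
  assume "crossings (add_mset (enat a, d) (add_mset (enat b, c) R)) + 1 \<noteq> crossings D"
  then obtain k r where "(k, r) \<in># R"
    "pair_crossings (enat a, d) (enat b, c) (k, r) < pair_crossings (enat a, c) (enat b, d) (k, r)"
    unfolding D using pointwise uncross(2) by fastforce
  then show "\<exists>k r. (enat k, r) \<in># R \<and> a > k \<and> k > b \<and> c > r \<and> r > d"
    using pointwise by blast
qed

lemma moveB_crossings:
  assumes "is_matching D" "a > b" "b > c"
    and D: "D = add_mset (enat a, c) (add_mset (\<infinity>, b) R)"
  shows "crossings (add_mset (enat a, b) (add_mset (\<infinity>, c) R)) < crossings D"
    and "crossings (add_mset (enat a, b) (add_mset (\<infinity>, c) R)) + 1 \<noteq> crossings D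
           \<Longrightarrow> \<exists>k r. (k, r) \<in># R \<and> k > enat a \<and> b > r \<and> r > c"
proof -
  have "c \<ge> 1" using assms(1) D by (simp add: is_matching_def valid_member_def)
  have pointwise:
    "pair_crossings (enat a, b) (\<infinity>, c) (k, r) \<le> pair_crossings (enat a, c) (\<infinity>, b) (k, r) \<and>
     (pair_crossings (enat a, b) (\<infinity>, c) (k, r) < pair_crossings (enat a, c) (\<infinity>, b) (k, r)
       \<longrightarrow> k > enat a \<and> b > r \<and> r > c)"
    if kr: "(k, r) \<in># R" for k r
  proof (rule moveB_pair_crossings[OF assms(2,3)])
    show "valid_member (k, r)" using assms(1) D kr by (simp add: is_matching_def)
    have "{#(enat a, c), (k, r)#} \<subseteq># D" "{#(\<infinity>, b), (k, r)#} \<subseteq># D" using D kr by simp_all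
    from is_matching_disjoint[OF assms(1) this(1)] is_matching_disjoint[OF assms(1) this(2)]
    show "\<forall>i\<in>{a, b, c}. \<not> touches i (k, r)"
      using \<open>c \<ge> 1\<close> assms(2,3) by (auto simp: touches_def)
  qed
  have crosses: "crosses (enat a, c) (\<infinity>, b)" "\<not> crosses (enat a, b) (\<infinity>, c)"
    using assms(2,3) by (simp_all add: crosses_arc_pole)
  note uncross = crossings_uncross_pair[OF crosses, of R]
  show "crossings (add_mset (enat a, b) (add_mset (\<infinity>, c) R)) < crossings D"
    unfolding D using pointwise by (intro uncross(1)) auto
  assume "crossings (add_mset (enat a, b) (add_mset (\<infinity>, c) R)) + 1 \<noteq> crossings D"
  then obtain k r where "(k, r) \<in># R"
    "pair_crossings (enat a, b) (\<infinity>, c) (k, r) < pair_crossings (enat a, c) (\<infinity>, b) (k, r)"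
    unfolding D using pointwise uncross(2) by fastforce
  then show "\<exists>k r. (k, r) \<in># R \<and> k > enat a \<and> b > r \<and> r > c"
    using pointwise by blast
qed

lemma moveAB_crossings_less:
  assumes "is_matching D" and "moveAB D D'"
  shows "crossings D' < crossings D"
  using assms(2) unfolding moveAB_def moveA_iff moveB_iff
  by (elim disjE exE conjE) (use moveA_crossings(1)[OF assms(1)] moveB_crossings(1)[OF assms(1)] in blast)+

lemma moveA_split:
  assumes "is_matching D" and "moveA D D'" and "crossings D' + 1 \<noteq> crossings D"
  shows "\<exists>D1. moveAB D D1 \<and> moveAB\<^sup>+\<^sup>+ D1 D'"
proof -
  obtain a b c d R where abcd: "a > b" "b > c" "c > d"
    and D: "D = add_mset (enat a, c) (add_mset (enat b, d) R)"
    and D': "D' = add_mset (enat a, d) (add_mset (enat b, c) R)"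
    using assms(2) unfolding moveA_iff by blast
  obtain k r where "(enat k, r) \<in># R" "a > k" "k > b" "c > r" "r > d"
    using moveA_crossings(2)[OF assms(1) abcd D] assms(3) D' by blast
  moreover from this(1) obtain R' where "R = add_mset (enat k, r) R'"
    by (metis multi_member_split)
  ultimately have "(moveA OO moveA OO moveA) D D'"
    unfolding D D' using moveA_through_nested_arc abcd(2) by blast
  then obtain D1 D2 where "moveA D D1" "moveA D1 D2" "moveA D2 D'" by blast
  then show ?thesis by (meson moveAB_def tranclp.r_into_trancl tranclp.trancl_into_trancl)
qed

lemma moveB_split:
  assumes "is_matching D" and "moveB D D'" and "crossings D' + 1 \<noteq> crossings D"
  shows "\<exists>D1. moveAB D D1 \<and> moveAB\<^sup>+\<^sup>+ D1 D'"
proof -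
  obtain a b c R where abc: "a > b" "b > c"
    and D: "D = add_mset (enat a, c) (add_mset (\<infinity>, b) R)"
    and D': "D' = add_mset (enat a, b) (add_mset (\<infinity>, c) R)"
    using assms(2) unfolding moveB_iff by blast
  obtain k r where kr: "(k, r) \<in># R" "k > enat a" "b > r" "r > c"
    using moveB_crossings(2)[OF assms(1) abc D] assms(3) D' by blast
  from kr(1) obtain R' where R: "R = add_mset (k, r) R'"
    by (metis multi_member_split)
  show ?thesis
  proof (cases k)
    case infinity
    then have "(moveB OO moveB) D D'"
      unfolding D D' R using moveB_through_nested_pole abc(1) kr(3,4) by blast
    then obtain D1 where "moveB D D1" "moveB D1 D'" by blast
    then show ?thesis by (meson moveAB_def tranclp.r_into_trancl)
  next
    case (enat k')
    then have "(moveA OO moveB OO moveB) D D'"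
      unfolding D D' R using moveB_through_enclosing_arc abc(1) kr(2-4) by simp
    then obtain D1 D2 where "moveA D D1" "moveB D1 D2" "moveB D2 D'" by blast
    then show ?thesis by (meson moveAB_def tranclp.r_into_trancl tranclp.trancl_into_trancl)
  qed
qed

lemma moveAB_split:
  "is_matching D \<Longrightarrow> moveAB D D' \<Longrightarrow> crossings D' + 1 \<noteq> crossings D
    \<Longrightarrow> \<exists>D1. moveAB D D1 \<and> moveAB\<^sup>+\<^sup>+ D1 D'"
  unfolding moveAB_def[of D D'] using moveA_split moveB_split by blast

lemma arc_less_D_Gamma_iff:
  assumes one_box: "\<forall>i\<ge>1. card {c. is_box \<beta> \<gamma> i c} \<le> 1"
    and D: "D \<in> D_Gamma \<alpha> \<beta> \<gamma> T" and E: "E \<in> D_Gamma \<alpha> \<beta> \<gamma> T"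
  shows "arc_less E D \<longleftrightarrow> moveAB\<^sup>+\<^sup>+ D E"
proof
  assume "arc_less E D"
  then show "moveAB\<^sup>+\<^sup>+ D E"
    using D_Gamma_arc_move_rtranclp[OF D E] by (auto simp: arc_less_def arc_le_def dest: rtranclpD)
next
  assume path: "moveAB\<^sup>+\<^sup>+ D E"
  have "E \<in> D_Gamma \<alpha> \<beta> \<gamma> T \<and> crossings E < crossings D"
  proof (rule tranclp_decreasing[where r=moveAB and f=crossings, OF _ _ path D])
    show "crossings y < crossings x" if "x \<in> D_Gamma \<alpha> \<beta> \<gamma> T" and "moveAB x y" for x y
      using moveAB_crossings_less[OF D_Gamma_is_matching[OF one_box that(1)] that(2)] .
  qed (rule moveAB_D_Gamma)
  moreover have "moveAB \<le> arc_move" by (auto simp: moveAB_def arc_move_def)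
  then have "arc_move\<^sup>*\<^sup>* D E"
    using tranclp_into_rtranclp[OF path] by (rule predicate2D[OF rtranclp_mono])
  ultimately show "arc_less E D" by (auto simp: arc_less_def arc_le_def)
qed

theorem mainTheorem4:
  fixes \<alpha> \<beta> \<gamma> :: "nat list"
    and T :: "nat \<Rightarrow> nat \<Rightarrow> nat"
    and \<Delta> \<Delta>' :: "member multiset"
  assumes "is_partition \<alpha>" and "is_partition \<beta>" and "is_partition \<gamma>"
    and "\<forall>x\<in>set \<alpha>. x \<le> 2"
    and "is_LR_tableau \<alpha> \<beta> \<gamma> T"
    and "\<forall>i\<ge>1. card {c. is_box \<beta> \<gamma> i c} \<le> 1"
    and "\<Delta> \<in> D_Gamma \<alpha> \<beta> \<gamma> T" and "\<Delta>' \<in> D_Gamma \<alpha> \<beta> \<gamma> T"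
  shows "(arc_less \<Delta>' \<Delta> \<and>
          \<not> (\<exists>\<Delta>''\<in>D_Gamma \<alpha> \<beta> \<gamma> T. arc_less \<Delta>' \<Delta>'' \<and> arc_less \<Delta>'' \<Delta>))
         \<longleftrightarrow> ((moveA \<Delta> \<Delta>' \<or> moveB \<Delta> \<Delta>') \<and> crossings \<Delta>' + 1 = crossings \<Delta>)"
proof -
  let ?S = "D_Gamma \<alpha> \<beta> \<gamma> T"
  note one_box = assms(6)
  have "(\<exists>\<Delta>''\<in>?S. arc_less \<Delta>' \<Delta>'' \<and> arc_less \<Delta>'' \<Delta>)
      \<longleftrightarrow> (\<exists>\<Delta>''\<in>?S. moveAB\<^sup>+\<^sup>+ \<Delta> \<Delta>'' \<and> moveAB\<^sup>+\<^sup>+ \<Delta>'' \<Delta>')"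
    using arc_less_D_Gamma_iff[OF one_box] assms(7,8) by blast
  moreover have "arc_less \<Delta>' \<Delta> \<longleftrightarrow> moveAB\<^sup>+\<^sup>+ \<Delta> \<Delta>'"
    using arc_less_D_Gamma_iff[OF one_box assms(7,8)] .
  moreover have "moveAB\<^sup>+\<^sup>+ \<Delta> \<Delta>' \<and> \<not> (\<exists>\<Delta>''\<in>?S. moveAB\<^sup>+\<^sup>+ \<Delta> \<Delta>'' \<and> moveAB\<^sup>+\<^sup>+ \<Delta>'' \<Delta>')
      \<longleftrightarrow> moveAB \<Delta> \<Delta>' \<and> crossings \<Delta>' + 1 = crossings \<Delta>"
    using D_Gamma_is_matching[OF one_box]
    by (intro tranclp_cover_iff[OF moveAB_D_Gamma moveAB_crossings_less moveAB_split assms(7)]) blast+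
  ultimately show ?thesis by (simp add: moveAB_def)
qed

end
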